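(* Let $f:\mathbb{R}^d\to\mathbb{R}$ be continuous (with respect to the Euclidean topology). For any distributions $p_1,p_2$ on $\mathbb{R}^d$ with $W_1(p_1,p_2)<\eta$, there exists a distribution $r$ with $r\in\mathbb{F}(p_1,\eta,f)\cap\mathbb{F}(p_2,\eta,f)$, i.e. $r$ is an $\eta$-friendly perturbation of both $p_1$ and $p_2$ for $f$.
   Context: $W_1(p,q)=\inf_{\pi\in\Pi(p,q)}\int\|x-y\|_2\,d\pi(x,y)$, where $\Pi(p,q)$ is the set of couplings. Friendly perturbation: for a distribution $p$, $\eta\ge0$ and $f:\mathbb{R}^d\to\mathbb{R}$, $r\in\mathbb{F}(p,\eta,f)$ means there is a coupling $\pi_{X,Y}$ of $X\sim p$ and $Y\sim r$ with $\mathbb{E}_\pi\|X-Y\|_2\le\eta$ and such that $f(Y)$ lies between $f(X)$ and $\mathbb{E}_r[f(Y)]$ almost surely. *)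

theory Defs
  imports "HOL-Probability.Probability"
begin

definition distribution :: "'a::euclidean_space measure \<Rightarrow> bool" where
  "distribution p \<longleftrightarrow> prob_space p \<and> sets p = sets (borel :: 'a measure)"

definition couplings :: "'a::euclidean_space measure \<Rightarrow> 'a measure \<Rightarrow> ('a \<times> 'a) measure set" where
  "couplings p q = {\<pi>. prob_space \<pi> \<and> sets \<pi> = sets (borel \<Otimes>\<^sub>M borel)
       \<and> distr \<pi> borel fst = p \<and> distr \<pi> borel snd = q}"

definition transport_cost :: "('a::euclidean_space \<times> 'a) measure \<Rightarrow> ennreal" where
  "transport_cost \<pi> = (\<integral>\<^sup>+ z. ennreal (norm (fst z - snd z)) \<partial>\<pi>)"

definition W1 :: "'a::euclidean_space measure \<Rightarrow> 'a measure \<Rightarrow> ennreal" where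
  "W1 p q = (INF \<pi>\<in>couplings p q. transport_cost \<pi>)"

definition between :: "real \<Rightarrow> real \<Rightarrow> real \<Rightarrow> bool" where
  "between y a b \<longleftrightarrow> min a b \<le> y \<and> y \<le> max a b"

definition friendly :: "'a::euclidean_space measure \<Rightarrow> real \<Rightarrow> ('a \<Rightarrow> real) \<Rightarrow> 'a measure \<Rightarrow> bool" where
  "friendly p \<eta> f r \<longleftrightarrow> integrable r f \<and>
     (\<exists>\<pi>\<in>couplings p r. transport_cost \<pi> \<le> ennreal \<eta> \<and>
        (AE z in \<pi>. between (f (snd z)) (f (fst z)) (\<integral>y. f y \<partial>r)))"

end

theory Submission
  imports Defs
begin

(* Take a coupling of p1 and p2 whose cost d is below eta. For a level c, move each pair (x, y) to a
   point z with f z equal to c clamped to the interval between f x and f y; by the intermediate value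
   theorem z can be taken on the segment [x, y], so it is within |x - y| of both x and y, and f z lies
   between f x and c and between f y and c. The expectation of f z is a 1-Lipschitz function of c, so
   by the intermediate value theorem some level c is equal to it, provided it stays bounded. Since
   f(X) need not be integrable, on the set where |f x| or |f y| exceeds a threshold L the value is
   pulled towards f 0 instead and z is taken on a segment through the origin, at an extra cost of at
   most |x| + |y|; as |X| and |Y| are integrable, for large L this costs less than eta - d. Choosing z
   by bisection makes it a measurable function of (x, y). *)

lemma between_iff_mult: "between w x y \<longleftrightarrow> (x - w) * (y - w) \<le> 0"
  unfolding between_def by (auto simp: mult_le_0_iff min_def max_def)

lemma between_subinterval: "between r c k \<Longrightarrow> between k u c \<Longrightarrow> between r u c"
  unfolding between_def by (simp add: min_def max_def split: if_splits)

lemma between_abs_le_max: "between r a b \<Longrightarrow> \<bar>r\<bar> \<le> max \<bar>a\<bar> \<bar>b\<bar>"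
  unfolding between_def by linarith

lemma abs_min_diff_le:
  "\<bar>a - a'\<bar> \<le> d \<Longrightarrow> \<bar>b - b'\<bar> \<le> d \<Longrightarrow> \<bar>min a b - min a' b'\<bar> \<le> d" for a b a' b' d :: real
  by (simp add: min_def abs_le_iff)

lemma abs_max_diff_le:
  "\<bar>a - a'\<bar> \<le> d \<Longrightarrow> \<bar>b - b'\<bar> \<le> d \<Longrightarrow> \<bar>max a b - max a' b'\<bar> \<le> d" for a b a' b' d :: real
  by (simp add: max_def abs_le_iff)

primrec bisection :: "(real \<Rightarrow> real) \<Rightarrow> real \<Rightarrow> real \<Rightarrow> nat \<Rightarrow> real \<times> real" where
  "bisection g a b 0 = (a, b)"
| "bisection g a b (Suc n) =
     (let l = fst (bisection g a b n); h = snd (bisection g a b n); m = (l + h) / 2 in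
      if g l * g m \<le> 0 then (l, m) else (m, h))"

lemma bisection_width: "snd (bisection g a b n) - fst (bisection g a b n) = (b - a) / 2 ^ n"
  by (induction n) (auto simp: Let_def field_simps)

lemma bisection_ordered:
  assumes "a \<le> b"
  shows "a \<le> fst (bisection g a b n) \<and> fst (bisection g a b n) \<le> snd (bisection g a b n)
    \<and> snd (bisection g a b n) \<le> b"
proof (induction n)
  case (Suc n)
  then show ?case
    by (auto simp: Let_def)
qed (simp add: assms)

lemma bisection_sign_change:
  assumes "g a * g b \<le> (0::real)"
  shows "g (fst (bisection g a b n)) * g (snd (bisection g a b n)) \<le> 0"
proof (induction n)
  case (Suc n)
  then show ?case
    by (auto simp: Let_def mult_le_0_iff)
qed (simp add: assms)

definition bisection_root :: "(real \<Rightarrow> real) \<Rightarrow> real \<Rightarrow> real \<Rightarrow> real" where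
  "bisection_root g a b = lim (\<lambda>n. fst (bisection g a b n))"

lemma bisection_tendsto:
  assumes "a \<le> b"
  shows "(\<lambda>n. fst (bisection g a b n)) \<longlonglongrightarrow> bisection_root g a b"
    and "(\<lambda>n. snd (bisection g a b n)) \<longlonglongrightarrow> bisection_root g a b"
proof -
  note ordered = bisection_ordered[OF assms, of g]
  have "incseq (\<lambda>n. fst (bisection g a b n))"
    using ordered by (intro incseq_SucI) (simp add: Let_def)
  moreover have "fst (bisection g a b n) \<le> b" for n
    using ordered[of n] by linarith
  ultimately have "convergent (\<lambda>n. fst (bisection g a b n))"
    using incseq_convergent convergent_def by blast
  then show fst: "(\<lambda>n. fst (bisection g a b n)) \<longlonglongrightarrow> bisection_root g a b"
    unfolding bisection_root_def by (simp add: convergent_LIMSEQ_iff)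
  have "(\<lambda>n. fst (bisection g a b n) + (b - a) / 2 ^ n) \<longlonglongrightarrow> bisection_root g a b + 0"
    by (intro tendsto_intros fst LIMSEQ_divide_realpow_zero) auto
  then show "(\<lambda>n. snd (bisection g a b n)) \<longlonglongrightarrow> bisection_root g a b"
    using bisection_width[of g a b] by (simp add: algebra_simps)
qed

lemma bisection_root_bounds:
  assumes "a \<le> b"
  shows "bisection_root g a b \<in> {a..b}"
  using LIMSEQ_le_const[OF bisection_tendsto(1)[OF assms]]
    LIMSEQ_le_const2[OF bisection_tendsto(2)[OF assms]] bisection_ordered[OF assms]
  by auto

lemma bisection_root_zero:
  assumes "a \<le> b" and g: "continuous_on {a..b} g" and "g a * g b \<le> 0"
  shows "g (bisection_root g a b) = 0"
proof -
  let ?t = "bisection_root g a b"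
  have "(\<lambda>n. g (fst (bisection g a b n)) * g (snd (bisection g a b n))) \<longlonglongrightarrow> g ?t * g ?t"
    using bisection_ordered[OF assms(1)] bisection_root_bounds[OF assms(1)]
    by (intro tendsto_mult continuous_on_tendsto_compose[OF g] bisection_tendsto assms(1) always_eventually)
      (auto intro: order_trans)
  then have "g ?t * g ?t \<le> 0"
    by (rule LIMSEQ_le_const2) (use bisection_sign_change[of g, OF assms(3)] in auto)
  then show ?thesis
    by (auto simp: mult_le_0_iff)
qed

lemma measurable_bisection_root:
  assumes [measurable]: "case_prod g \<in> borel_measurable (M \<Otimes>\<^sub>M borel)" and "a \<le> b"
  shows "(\<lambda>x. bisection_root (g x) a b) \<in> borel_measurable M"
proof (rule borel_measurable_LIMSEQ_real)
  show "(\<lambda>n. fst (bisection (g x) a b n)) \<longlonglongrightarrow> bisection_root (g x) a b" for x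
    by (rule bisection_tendsto(1)[OF \<open>a \<le> b\<close>])
  have [measurable]: "(\<lambda>x. g x (t x)) \<in> borel_measurable M" if [measurable]: "t \<in> borel_measurable M" for t
    using measurable_compose[of "\<lambda>x. (x, t x)" M "M \<Otimes>\<^sub>M borel" "case_prod g"] by simp
  show "(\<lambda>x. fst (bisection (g x) a b n)) \<in> borel_measurable M" for n
  proof -
    have "(\<lambda>x. fst (bisection (g x) a b n)) \<in> borel_measurable M
      \<and> (\<lambda>x. snd (bisection (g x) a b n)) \<in> borel_measurable M"
    proof (induction n)
      case (Suc n)
      then have [measurable]: "(\<lambda>x. fst (bisection (g x) a b n)) \<in> borel_measurable M"
          "(\<lambda>x. snd (bisection (g x) a b n)) \<in> borel_measurable M"
        by auto
      show ?case
        by (simp add: Let_def if_distrib[of fst] if_distrib[of snd] cong del: if_weak_cong)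
    qed simp
    then show ?thesis ..
  qed
qed

definition segment_root :: "('a::real_vector \<Rightarrow> real) \<Rightarrow> 'a \<Rightarrow> 'a \<Rightarrow> real \<Rightarrow> 'a" where
  "segment_root f a b w = a + bisection_root (\<lambda>t. f (a + t *\<^sub>R (b - a)) - w) 0 1 *\<^sub>R (b - a)"

lemma segment_root_in_closed_segment: "segment_root f a b w \<in> closed_segment a b"
proof -
  let ?t = "bisection_root (\<lambda>t. f (a + t *\<^sub>R (b - a)) - w) 0 1"
  have "segment_root f a b w = (1 - ?t) *\<^sub>R a + ?t *\<^sub>R b"
    by (simp add: segment_root_def algebra_simps)
  then show ?thesis
    using bisection_root_bounds[of 0 1] by (auto simp: in_segment)
qed

lemma segment_root_value:
  fixes f :: "'a::real_normed_vector \<Rightarrow> real"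
  assumes f: "continuous_on (closed_segment a b) f" and "between w (f a) (f b)"
  shows "f (segment_root f a b w) = w"
proof -
  let ?g = "\<lambda>t. f (a + t *\<^sub>R (b - a)) - w"
  have "(\<lambda>t. a + t *\<^sub>R (b - a)) ` {0..1} \<subseteq> closed_segment a b"
    by (auto simp: in_segment algebra_simps intro!: exI)
  then have "continuous_on {0..1} ?g"
    by (intro continuous_intros continuous_on_compose2[OF f]) auto
  moreover have "?g 0 * ?g 1 \<le> 0"
    using assms(2) by (simp add: between_iff_mult)
  ultimately have "?g (bisection_root ?g 0 1) = 0"
    by (intro bisection_root_zero) auto
  then show ?thesis
    by (simp add: segment_root_def)
qed

lemma measurable_segment_root [measurable]:
  fixes f :: "'a::{real_normed_vector, second_countable_topology} \<Rightarrow> real"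
  assumes [measurable]: "f \<in> borel_measurable borel"
    "a \<in> borel_measurable M" "b \<in> borel_measurable M" "w \<in> borel_measurable M"
  shows "(\<lambda>x. segment_root f (a x) (b x) (w x)) \<in> borel_measurable M"
proof -
  have "(\<lambda>x. bisection_root (\<lambda>t. f (a x + t *\<^sub>R (b x - a x)) - w x) 0 1) \<in> borel_measurable M"
    by (rule measurable_bisection_root) auto
  then show ?thesis
    unfolding segment_root_def by measurable
qed

definition value_point :: "('a::real_vector \<Rightarrow> real) \<Rightarrow> 'a \<Rightarrow> 'a \<Rightarrow> real \<Rightarrow> 'a" where
  "value_point f a b w =
     (if between w (f a) (f b) then segment_root f a b w
      else if between w (f a) (f 0) then segment_root f a 0 w
      else segment_root f b 0 w)"

lemma value_point_value:
  fixes f :: "'a::real_normed_vector \<Rightarrow> real"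
  assumes "continuous_on UNIV f"
    and "between w (f a) (f b) \<or> between w (f a) (f 0) \<or> between w (f b) (f 0)"
  shows "f (value_point f a b w) = w"
  using assms continuous_on_subset[OF assms(1)]
  by (auto simp: value_point_def intro!: segment_root_value)

lemma value_point_dist:
  fixes f :: "'a::real_normed_vector \<Rightarrow> real" and a b :: 'a and w :: real
  defines "e \<equiv> (if between w (f a) (f b) then 0 else norm a + norm b)"
  shows "norm (a - value_point f a b w) \<le> norm (a - b) + e"
    and "norm (b - value_point f a b w) \<le> norm (a - b) + e"
proof -
  have ab: "norm a \<le> norm (a - b) + norm b" "norm b \<le> norm (a - b) + norm a"
    using norm_triangle_sub[of a b] norm_triangle_sub[of b a] by (auto simp: norm_minus_commute)
  show "norm (a - value_point f a b w) \<le> norm (a - b) + e"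
    and "norm (b - value_point f a b w) \<le> norm (a - b) + e"
    using segment_bound[OF segment_root_in_closed_segment, of f a b w]
      segment_bound[OF segment_root_in_closed_segment, of f a 0 w]
      segment_bound[OF segment_root_in_closed_segment, of f b 0 w] ab
      norm_triangle_ineq4[of b "segment_root f a 0 w"] norm_triangle_ineq4[of a "segment_root f b 0 w"]
    by (auto simp: value_point_def e_def norm_minus_commute) (smt (verit) norm_ge_zero)+
qed

lemma measurable_value_point [measurable]:
  fixes f :: "'a::{real_normed_vector, second_countable_topology} \<Rightarrow> real"
  assumes [measurable]: "f \<in> borel_measurable borel"
    "a \<in> borel_measurable M" "b \<in> borel_measurable M" "w \<in> borel_measurable M"
  shows "(\<lambda>x. value_point f (a x) (b x) (w x)) \<in> borel_measurable M"
  unfolding value_point_def between_def by measurable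

definition nearest_between :: "real \<Rightarrow> real \<Rightarrow> real \<Rightarrow> real" where
  "nearest_between u v c = max (min u v) (min c (max u v))"

lemma nearest_between_lipschitz:
  "\<bar>u - u'\<bar> \<le> d \<Longrightarrow> \<bar>v - v'\<bar> \<le> d \<Longrightarrow> \<bar>c - c'\<bar> \<le> d
    \<Longrightarrow> \<bar>nearest_between u v c - nearest_between u' v' c'\<bar> \<le> d"
  unfolding nearest_between_def by (intro abs_min_diff_le abs_max_diff_le)

lemma between_nearest_between: "between (nearest_between u v c) u v"
  unfolding nearest_between_def between_def by auto

lemma between_nearest_between_level:
  "between (nearest_between u v c) u c \<and> between (nearest_between u v c) v c"
  unfolding nearest_between_def between_def by (simp add: min_def max_def)

(* u, v stand for f x, f y, y0 for f 0, c for the level and L for the truncation threshold. *)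

definition target_value :: "real \<Rightarrow> real \<Rightarrow> real \<Rightarrow> real \<Rightarrow> real \<Rightarrow> real" where
  "target_value L y0 c u v =
     (let k = nearest_between u v c in if max \<bar>u\<bar> \<bar>v\<bar> \<le> L then k else nearest_between c k y0)"

lemma target_value_between_level:
  "between (target_value L y0 c u v) u c \<and> between (target_value L y0 c u v) v c"
  using between_nearest_between_level[of u v c] between_nearest_between[of c "nearest_between u v c" y0]
  unfolding target_value_def Let_def by (auto intro: between_subinterval)

lemma target_value_between_small:
  "max \<bar>u\<bar> \<bar>v\<bar> \<le> L \<Longrightarrow> between (target_value L y0 c u v) u v"
  unfolding target_value_def by (simp add: between_nearest_between)

lemma target_value_in_hull:
  "between (target_value L y0 c u v) u v \<or> between (target_value L y0 c u v) u y0
    \<or> between (target_value L y0 c u v) v y0"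
  unfolding target_value_def nearest_between_def between_def Let_def by (smt (verit) min_def max_def)

lemma abs_target_value_le:
  assumes "0 \<le> L"
  shows "\<bar>target_value L y0 c u v\<bar> \<le> \<bar>c\<bar> + L + \<bar>y0\<bar>"
proof (cases "max \<bar>u\<bar> \<bar>v\<bar> \<le> L")
  case True
  then show ?thesis
    using between_abs_le_max[OF between_nearest_between, of u v c] assms
    by (simp add: target_value_def del: max.bounded_iff) linarith
next
  case False
  then show ?thesis
    using between_abs_le_max[OF conjunct1[OF between_nearest_between_level], of c "nearest_between u v c" y0]
      assms
    by (simp add: target_value_def Let_def del: max.bounded_iff) linarith
qed

lemma target_value_le_level: "0 \<le> L \<Longrightarrow> L + \<bar>y0\<bar> \<le> c \<Longrightarrow> target_value L y0 c u v \<le> c"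
  unfolding target_value_def nearest_between_def by (auto simp: Let_def min_def max_def)

lemma target_value_ge_level: "0 \<le> L \<Longrightarrow> c \<le> - (L + \<bar>y0\<bar>) \<Longrightarrow> c \<le> target_value L y0 c u v"
  unfolding target_value_def nearest_between_def by (auto simp: Let_def min_def max_def)

lemma target_value_lipschitz: "\<bar>target_value L y0 c u v - target_value L y0 c' u v\<bar> \<le> \<bar>c - c'\<bar>"
proof -
  have "\<bar>nearest_between u v c - nearest_between u v c'\<bar> \<le> \<bar>c - c'\<bar>"
    by (rule nearest_between_lipschitz) auto
  then show ?thesis
    unfolding target_value_def Let_def by (auto intro: nearest_between_lipschitz)
qed

lemma value_point_target_value_dist:
  fixes f :: "'a::real_normed_vector \<Rightarrow> real" and a b :: 'a and L c :: real
  defines "z \<equiv> value_point f a b (target_value L (f 0) c (f a) (f b))"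
    and "e \<equiv> (if L < max \<bar>f a\<bar> \<bar>f b\<bar> then norm a + norm b else 0)"
  shows "norm (a - z) \<le> norm (a - b) + e" and "norm (b - z) \<le> norm (a - b) + e"
proof -
  note dist = value_point_dist[where f = f and a = a and b = b and w = "target_value L (f 0) c (f a) (f b)"]
  have "norm (a - z) \<le> norm (a - b) + e \<and> norm (b - z) \<le> norm (a - b) + e"
  proof (cases "max \<bar>f a\<bar> \<bar>f b\<bar> \<le> L")
    case True
    then show ?thesis
      using dist target_value_between_small[OF True] by (auto simp: z_def e_def less_max_iff_disj)
  next
    case False
    then show ?thesis
      using dist unfolding z_def e_def by (smt (verit) norm_ge_zero)
  qed
  then show "norm (a - z) \<le> norm (a - b) + e" "norm (b - z) \<le> norm (a - b) + e"
    by auto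
qed

lemma measurable_target_value [measurable]:
  assumes [measurable]: "u \<in> borel_measurable M" "v \<in> borel_measurable M"
  shows "(\<lambda>z. target_value L y0 c (u z) (v z)) \<in> borel_measurable M"
  unfolding target_value_def nearest_between_def Let_def by measurable

lemma (in prob_space) integrable_target_value:
  assumes "u \<in> borel_measurable M" "v \<in> borel_measurable M" and "0 \<le> L"
  shows "integrable M (\<lambda>z. target_value L y0 c (u z) (v z))"
  using assms by (intro integrable_const_bound[where B = "\<bar>c\<bar> + L + \<bar>y0\<bar>"])
    (auto simp: abs_target_value_le)

lemma (in prob_space) exists_level_eq_expectation:
  assumes [measurable]: "u \<in> borel_measurable M" "v \<in> borel_measurable M" and "0 \<le> L"
  shows "\<exists>c. (\<integral>z. target_value L y0 c (u z) (v z) \<partial>M) = c"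
proof -
  define G where "G c = (\<integral>z. target_value L y0 c (u z) (v z) \<partial>M)" for c
  define B where "B = L + \<bar>y0\<bar>"
  note integrable = integrable_target_value[OF assms]
  have "dist (G c) (G c') \<le> 1 * dist c c'" for c c'
  proof -
    have "\<bar>G c - G c'\<bar> \<le> (\<integral>z. \<bar>target_value L y0 c (u z) (v z) - target_value L y0 c' (u z) (v z)\<bar> \<partial>M)"
      unfolding G_def
      by (simp add: Bochner_Integration.integral_diff[OF integrable integrable, symmetric] integral_abs_bound)
    also have "\<dots> \<le> (\<integral>z. \<bar>c - c'\<bar> \<partial>M)"
      by (intro integral_mono integrable integrable_abs Bochner_Integration.integrable_diff
          target_value_lipschitz) auto
    finally show ?thesis
      by (simp add: prob_space dist_real_def)
  qed
  then have "continuous_on {- B..B} (\<lambda>c. G c - c)"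
    by (intro continuous_intros lipschitz_on_continuous_on[where L = 1] lipschitz_onI) auto
  moreover have "G B \<le> (\<integral>z. B \<partial>M)" "(\<integral>z. - B \<partial>M) \<le> G (- B)"
    unfolding G_def B_def using \<open>0 \<le> L\<close>
    by (intro integral_mono integrable target_value_le_level target_value_ge_level; simp)+
  ultimately obtain c where "G c - c = 0"
    using IVT2'[of "\<lambda>c. G c - c" B 0 "- B"] \<open>0 \<le> L\<close> by (auto simp: prob_space B_def)
  then show ?thesis
    unfolding G_def by auto
qed

lemma exists_nn_integral_tail_less:
  fixes h :: "'a \<Rightarrow> 'b::{banach, second_countable_topology}"
  assumes "integrable M h" and [measurable]: "g \<in> borel_measurable M" and "0 < e"
  shows "\<exists>n::nat. (\<integral>\<^sup>+x. indicator {x. real n < g x} x * ennreal (norm (h x)) \<partial>M) < e"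
proof -
  define t where "t n x = indicator {x. real n < g x} x * ennreal (norm (h x))" for n x
  have [measurable]: "h \<in> borel_measurable M"
    using assms(1) by (rule borel_measurable_integrable)
  have [measurable]: "t n \<in> borel_measurable M" for n
    unfolding t_def indicator_def by measurable
  have "(\<integral>\<^sup>+x. t n x \<partial>M) \<le> (\<integral>\<^sup>+x. ennreal (norm (h x)) \<partial>M)" for n
    by (intro nn_integral_mono) (simp add: t_def indicator_def)
  then have "(\<integral>\<^sup>+x. t n x \<partial>M) < \<infinity>" for n
    using assms(1) unfolding integrable_iff_bounded by (auto intro: le_less_trans)
  moreover have "decseq t"
    by (intro decseq_SucI le_funI) (auto simp: t_def indicator_def)
  ultimately have "(\<integral>\<^sup>+x. (INF n. t n x) \<partial>M) = (INF n. \<integral>\<^sup>+x. t n x \<partial>M)"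
    by (intro nn_integral_monotone_convergence_INF_decseq) auto
  moreover have "(INF n. t n x) = 0" for x
  proof -
    obtain n :: nat where "g x \<le> real n"
      using real_arch_simple by blast
    then have "t n x = 0"
      by (simp add: t_def)
    then show ?thesis
      by (metis INF_lower UNIV_I le_zero_eq)
  qed
  ultimately have "(INF n. \<integral>\<^sup>+x. t n x \<partial>M) < e"
    using \<open>0 < e\<close> by simp
  then show ?thesis
    unfolding INF_less_iff t_def by blast
qed

lemma nn_integral_displacement_le:
  fixes \<pi> :: "('a::euclidean_space \<times> 'a) measure"
  assumes [measurable_cong]: "sets \<pi> = sets (borel \<Otimes>\<^sub>M borel)" and [measurable]: "s \<in> borel_measurable \<pi>"
    and "\<And>z. 0 \<le> s z" and "\<And>z. norm (X z - Y z) \<le> norm (fst z - snd z) + s z"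
  shows "(\<integral>\<^sup>+z. ennreal (norm (X z - Y z)) \<partial>\<pi>) \<le> transport_cost \<pi> + (\<integral>\<^sup>+z. ennreal (s z) \<partial>\<pi>)"
proof -
  have "(\<integral>\<^sup>+z. ennreal (norm (X z - Y z)) \<partial>\<pi>) \<le> (\<integral>\<^sup>+z. ennreal (norm (fst z - snd z)) + ennreal (s z) \<partial>\<pi>)"
    using assms(3,4) by (intro nn_integral_mono) (simp add: ennreal_plus[symmetric] ennreal_leI del: ennreal_plus)
  also have "\<dots> = transport_cost \<pi> + (\<integral>\<^sup>+z. ennreal (s z) \<partial>\<pi>)"
    unfolding transport_cost_def by (intro nn_integral_add) auto
  finally show ?thesis .
qed

lemma friendly_distrI:
  fixes f :: "'a::euclidean_space \<Rightarrow> real" and \<pi> :: "('a \<times> 'a) measure"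
  assumes "prob_space \<pi>" and [measurable_cong]: "sets \<pi> = sets (borel \<Otimes>\<^sub>M borel)"
    and [measurable]: "X \<in> borel_measurable \<pi>" "Y \<in> borel_measurable \<pi>" "f \<in> borel_measurable borel"
    and "integrable \<pi> (\<lambda>z. f (Y z))" and "(\<integral>z. f (Y z) \<partial>\<pi>) = c"
    and "(\<integral>\<^sup>+z. ennreal (norm (X z - Y z)) \<partial>\<pi>) \<le> ennreal \<eta>"
    and "\<And>z. between (f (Y z)) (f (X z)) c"
  shows "friendly (distr \<pi> borel X) \<eta> f (distr \<pi> borel Y)"
proof -
  define \<rho> where "\<rho> = distr \<pi> (borel \<Otimes>\<^sub>M borel) (\<lambda>z. (X z, Y z))"
  have "prob_space \<rho>"
    unfolding \<rho>_def by (intro prob_space.prob_space_distr assms(1)) measurable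
  then have "\<rho> \<in> couplings (distr \<pi> borel X) (distr \<pi> borel Y)"
    by (auto simp: couplings_def \<rho>_def distr_distr comp_def)
  moreover have "transport_cost \<rho> \<le> ennreal \<eta>"
    using assms(8) by (simp add: transport_cost_def \<rho>_def nn_integral_distr)
  moreover have "AE z in \<rho>. between (f (snd z)) (f (fst z)) (\<integral>y. f y \<partial>distr \<pi> borel Y)"
    using assms(7,9) unfolding \<rho>_def by (subst AE_distr_iff) (auto simp: integral_distr between_def)
  moreover have "integrable (distr \<pi> borel Y) f"
    using assms(6) by (simp add: integrable_distr_eq)
  ultimately show ?thesis
    unfolding friendly_def by blast
qed

lemma common_friendly_perturbation_of_coupling:
  fixes f :: "'a::euclidean_space \<Rightarrow> real" and \<pi> :: "('a \<times> 'a) measure"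
  assumes f: "continuous_on UNIV f" and \<pi>: "prob_space \<pi>"
    and sets_\<pi> [measurable_cong]: "sets \<pi> = sets (borel \<Otimes>\<^sub>M borel)" and "0 \<le> L"
    and cost: "transport_cost \<pi> + (\<integral>\<^sup>+z. indicator {z. L < max \<bar>f (fst z)\<bar> \<bar>f (snd z)\<bar>} z
        * ennreal (norm (fst z) + norm (snd z)) \<partial>\<pi>) \<le> ennreal \<eta>"
  shows "\<exists>r. distribution r \<and> friendly (distr \<pi> borel fst) \<eta> f r \<and> friendly (distr \<pi> borel snd) \<eta> f r"
proof -
  interpret prob_space \<pi> by (fact \<pi>)
  have [measurable]: "f \<in> borel_measurable borel"
    using f by (rule borel_measurable_continuous_onI)
  define T where "T c z = target_value L (f 0) c (f (fst z)) (f (snd z))" for c z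
  obtain c where c: "(\<integral>z. T c z \<partial>\<pi>) = c"
    using exists_level_eq_expectation[of "\<lambda>z. f (fst z)" "\<lambda>z. f (snd z)"] \<open>0 \<le> L\<close> by (auto simp: T_def)
  define Y where "Y z = value_point f (fst z) (snd z) (T c z)" for z
  have [measurable]: "Y \<in> borel_measurable \<pi>"
    unfolding Y_def T_def by measurable
  have fY: "f (Y z) = T c z" for z
    unfolding Y_def T_def using f target_value_in_hull by (rule value_point_value)
  define tail where
    "tail z = (if L < max \<bar>f (fst z)\<bar> \<bar>f (snd z)\<bar> then norm (fst z) + norm (snd z) else 0)" for z
  have [measurable]: "tail \<in> borel_measurable \<pi>"
    unfolding tail_def by measurable
  have "(\<integral>\<^sup>+z. ennreal (tail z) \<partial>\<pi>) = (\<integral>\<^sup>+z. indicator {z. L < max \<bar>f (fst z)\<bar> \<bar>f (snd z)\<bar>} z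
      * ennreal (norm (fst z) + norm (snd z)) \<partial>\<pi>)"
    by (intro nn_integral_cong) (simp add: tail_def)
  with cost have cost_tail: "transport_cost \<pi> + (\<integral>\<^sup>+z. ennreal (tail z) \<partial>\<pi>) \<le> ennreal \<eta>"
    by simp
  have "norm (fst z - Y z) \<le> norm (fst z - snd z) + tail z" "norm (snd z - Y z) \<le> norm (fst z - snd z) + tail z"
    for z
    unfolding Y_def T_def tail_def by (rule value_point_target_value_dist)+
  then have moved: "(\<integral>\<^sup>+z. ennreal (norm (fst z - Y z)) \<partial>\<pi>) \<le> ennreal \<eta>"
    "(\<integral>\<^sup>+z. ennreal (norm (snd z - Y z)) \<partial>\<pi>) \<le> ennreal \<eta>"
    by (intro order_trans[OF nn_integral_displacement_le[OF sets_\<pi>] cost_tail]; simp add: tail_def)+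
  have "integrable \<pi> (\<lambda>z. f (Y z))" "(\<integral>z. f (Y z) \<partial>\<pi>) = c"
    unfolding fY T_def using \<open>0 \<le> L\<close> c by (auto simp: T_def intro: integrable_target_value)
  moreover have "between (f (Y z)) (f (fst z)) c" "between (f (Y z)) (f (snd z)) c" for z
    using target_value_between_level by (auto simp: fY T_def)
  ultimately have "friendly (distr \<pi> borel fst) \<eta> f (distr \<pi> borel Y)"
    "friendly (distr \<pi> borel snd) \<eta> f (distr \<pi> borel Y)"
    using moved by (auto intro!: friendly_distrI[OF \<pi> sets_\<pi>])
  moreover have "distribution (distr \<pi> borel Y)"
    by (auto simp: distribution_def intro!: prob_space_distr)
  ultimately show ?thesis
    by blast
qed

theorem lemma4p2:
  fixes f :: "'a::euclidean_space \<Rightarrow> real" and p1 p2 :: "'a measure" and \<eta> :: real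
  assumes "continuous_on UNIV f"
    and "distribution p1" and "distribution p2"
    and "integrable p1 norm" and "integrable p2 norm"
    and "0 \<le> \<eta>"
    and "W1 p1 p2 < ennreal \<eta>"
  shows "\<exists>r. distribution r \<and> friendly p1 \<eta> f r \<and> friendly p2 \<eta> f r"
proof -
  obtain \<pi> where "\<pi> \<in> couplings p1 p2" and cost: "transport_cost \<pi> < ennreal \<eta>"
    using assms(7) by (auto simp: W1_def INF_less_iff)
  then have \<pi>: "prob_space \<pi>" and sets_\<pi> [measurable_cong]: "sets \<pi> = sets (borel \<Otimes>\<^sub>M borel)"
    and p1: "p1 = distr \<pi> borel fst" and p2: "p2 = distr \<pi> borel snd"
    by (auto simp: couplings_def)
  have [measurable]: "f \<in> borel_measurable borel"
    using assms(1) by (rule borel_measurable_continuous_onI)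
  have "integrable \<pi> (\<lambda>z. norm (fst z) + norm (snd z))"
    using assms(4,5) by (simp add: p1 p2 integrable_distr_eq)
  moreover have "(\<lambda>z. max \<bar>f (fst z)\<bar> \<bar>f (snd z)\<bar>) \<in> borel_measurable \<pi>"
    by measurable
  moreover have "0 < ennreal \<eta> - transport_cost \<pi>"
    using cost by (simp add: less_diff_eq_ennreal)
  ultimately obtain n :: nat where "(\<integral>\<^sup>+z. indicator {z. real n < max \<bar>f (fst z)\<bar> \<bar>f (snd z)\<bar>} z
      * ennreal (norm (norm (fst z) + norm (snd z))) \<partial>\<pi>) < ennreal \<eta> - transport_cost \<pi>"
    by (blast dest: exists_nn_integral_tail_less)
  then have "transport_cost \<pi> + (\<integral>\<^sup>+z. indicator {z. real n < max \<bar>f (fst z)\<bar> \<bar>f (snd z)\<bar>} z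
      * ennreal (norm (fst z) + norm (snd z)) \<partial>\<pi>) \<le> ennreal \<eta>"
    by (simp add: less_diff_eq_ennreal add.commute)
  then show ?thesis
    unfolding p1 p2 by (rule common_friendly_perturbation_of_coupling[OF assms(1) \<pi> sets_\<pi> of_nat_0_le_iff])
qed

end
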